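(* Let $r\ge2$ be an integer, let $f\in C_p(\mathbb{R})$, let $n\in\mathbb{N}_0$, $k\in\{0,1,\dots,r^n-1\}$, $y\in(0,1)$ and $t\in(0,\infty)$. Then $$q_f\Big(t,x;\tfrac{k+y}{r^n}\Big)\ge \min\Big\{q_f\Big(t,x;\tfrac{k}{r^n}\Big),\,q_f\Big(t,x;\tfrac{k+1}{r^n}\Big)\Big\}\quad\text{for all }x\in\mathbb{R}$$ holds if and only if $\Delta_{n,k}(y;f)\le -\frac1t$.
   Context: $C_p(\mathbb{R})$ denotes the set of all continuous functions $f:\mathbb{R}\to\mathbb{R}$ periodic with period $1$ with $f(0)=0$; $\mathbb{N}_0=\mathbb{N}\cup\{0\}$. For $f\in C_p(\mathbb{R})$, $q_f(t,x;z)=f(z)+\frac{1}{2t}(x-z)^2$ for $(t,x,z)\in(0,\infty)\times\mathbb{R}\times\mathbb{R}$. For $(n,k,y)\in\mathbb{N}_0\times\mathbb{Z}\times(0,1)$, $\delta^+_{n,k}(y;f)=\dfrac{f(\frac{k+1}{r^n})-f(\frac{k+y}{r^n})}{\frac{1-y}{r^n}}$, $\delta^-_{n,k}(y;f)=\dfrac{f(\frac{k+y}{r^n})-f(\frac{k}{r^n})}{\frac{y}{r^n}}$, and $\Delta_{n,k}(y;f)=2r^n\big(\delta^+_{n,k}(y;f)-\delta^-_{n,k}(y;f)\big)$. *)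

theory Defs
  imports Complex_Main
begin

definition Cp :: "(real \<Rightarrow> real) set" where
  "Cp = {f. continuous_on UNIV f \<and> (\<forall>x. f (x + 1) = f x) \<and> f 0 = 0}"

definition q :: "(real \<Rightarrow> real) \<Rightarrow> real \<Rightarrow> real \<Rightarrow> real \<Rightarrow> real" where
  "q f t x z = f z + (x - z)^2 / (2 * t)"

definition delta_plus :: "nat \<Rightarrow> (real \<Rightarrow> real) \<Rightarrow> nat \<Rightarrow> int \<Rightarrow> real \<Rightarrow> real" where
  "delta_plus r f n k y =
     (f ((of_int k + 1) / real r ^ n) - f ((of_int k + y) / real r ^ n)) / ((1 - y) / real r ^ n)"

definition delta_minus :: "nat \<Rightarrow> (real \<Rightarrow> real) \<Rightarrow> nat \<Rightarrow> int \<Rightarrow> real \<Rightarrow> real" where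
  "delta_minus r f n k y =
     (f ((of_int k + y) / real r ^ n) - f (of_int k / real r ^ n)) / (y / real r ^ n)"

definition Delta :: "nat \<Rightarrow> (real \<Rightarrow> real) \<Rightarrow> nat \<Rightarrow> int \<Rightarrow> real \<Rightarrow> real" where
  "Delta r f n k y = 2 * real r ^ n * (delta_plus r f n k y - delta_minus r f n k y)"

end

theory Submission
  imports Defs
begin

text \<open>The parabolas \<open>x \<mapsto> q f t x z\<close> all have the same leading coefficient, so two of them
  cross at a single point, and which one lies lower on either side is determined by the order of
  their vertices. Hence, for \<open>z\<^sub>0 < z\<^sub>1 < z\<^sub>2\<close>, the middle parabola dominates the minimum of the
  outer two exactly when the half-line where it lies above the left one and the half-line where
  it lies above the right one cover \<open>\<real>\<close>, i.e. when the crossing point with the right parabola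
  does not exceed that with the left one. Written out, this is a bound on the second divided
  difference of \<open>f\<close>, namely \<open>Delta r f n k y\<close>.\<close>

definition crossing :: "(real \<Rightarrow> real) \<Rightarrow> real \<Rightarrow> real \<Rightarrow> real \<Rightarrow> real" where
  "crossing f t z w = (z + w) / 2 + t * (f w - f z) / (w - z)"

lemma crossing_commute: "crossing f t z w = crossing f t w z"
  unfolding crossing_def by (cases "z = w") (simp_all add: field_simps)

lemma q_diff: "q f t x w - q f t x z = f w - f z - (w - z) * (2 * x - z - w) / (2 * t)"
  unfolding q_def by (cases "t = 0") (simp_all add: field_simps power2_eq_square)

lemma q_le_q_iff_le_crossing:
  assumes "0 < t" and "z < w"
  shows "q f t x z \<le> q f t x w \<longleftrightarrow> x \<le> crossing f t z w"
proof -
  have "q f t x z \<le> q f t x w \<longleftrightarrow> (w - z) * (2 * x - z - w) / (2 * t) \<le> f w - f z"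
    using q_diff [of f t x w z] by linarith
  also have "\<dots> \<longleftrightarrow> (w - z) * (2 * x - z - w) \<le> 2 * t * (f w - f z)"
    using assms(1) by (simp add: pos_divide_le_eq mult.commute)
  also have "\<dots> \<longleftrightarrow> 2 * x - z - w \<le> 2 * t * (f w - f z) / (w - z)"
    using assms(2) by (simp add: pos_le_divide_eq mult.commute)
  finally show ?thesis
    unfolding crossing_def by (simp add: field_simps)
qed

lemma q_le_q_iff_crossing_le:
  assumes "0 < t" and "w < z"
  shows "q f t x z \<le> q f t x w \<longleftrightarrow> crossing f t z w \<le> x"
proof -
  have reflect: "(w - z) * (2 * x - z - w) = (z - w) * (z + w - 2 * x)"
    by (simp add: algebra_simps)
  have "q f t x z \<le> q f t x w \<longleftrightarrow> (z - w) * (z + w - 2 * x) / (2 * t) \<le> f w - f z"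
    using q_diff [of f t x w z, unfolded reflect] by linarith
  also have "\<dots> \<longleftrightarrow> (z - w) * (z + w - 2 * x) \<le> 2 * t * (f w - f z)"
    using assms(1) by (simp add: pos_divide_le_eq mult.commute)
  also have "\<dots> \<longleftrightarrow> z + w - 2 * x \<le> 2 * t * (f w - f z) / (z - w)"
    using assms(2) by (simp add: pos_le_divide_eq mult.commute)
  finally show ?thesis
    unfolding crossing_def using assms(2) by (simp add: divide_minus_right [symmetric] field_simps)
qed

lemma halflines_cover_iff:
  fixes a b :: real
  shows "(\<forall>x. x \<le> a \<or> b \<le> x) \<longleftrightarrow> b \<le> a"
proof
  assume "\<forall>x. x \<le> a \<or> b \<le> x"
  from this [rule_format, of "(a + b) / 2"] show "b \<le> a" by auto
qed auto

lemma q_ge_min_iff_crossing_le: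
  assumes "0 < t" and "z\<^sub>0 < z\<^sub>1" and "z\<^sub>1 < z\<^sub>2"
  shows "(\<forall>x. min (q f t x z\<^sub>0) (q f t x z\<^sub>2) \<le> q f t x z\<^sub>1)
    \<longleftrightarrow> crossing f t z\<^sub>1 z\<^sub>2 \<le> crossing f t z\<^sub>0 z\<^sub>1"
proof -
  have "min (q f t x z\<^sub>0) (q f t x z\<^sub>2) \<le> q f t x z\<^sub>1
      \<longleftrightarrow> x \<le> crossing f t z\<^sub>0 z\<^sub>1 \<or> crossing f t z\<^sub>1 z\<^sub>2 \<le> x" for x
    using q_le_q_iff_le_crossing [OF assms(1,2)] q_le_q_iff_crossing_le [OF assms(1,3)]
    by (simp add: min_le_iff_disj crossing_commute [of f t z\<^sub>2])
  then show ?thesis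
    by (simp add: halflines_cover_iff)
qed

lemma crossing_le_iff_divided_difference:
  assumes "0 < t" and "z\<^sub>0 < z\<^sub>1" and "z\<^sub>1 < z\<^sub>2"
  shows "crossing f t z\<^sub>1 z\<^sub>2 \<le> crossing f t z\<^sub>0 z\<^sub>1
    \<longleftrightarrow> 2 / (z\<^sub>2 - z\<^sub>0) * ((f z\<^sub>2 - f z\<^sub>1) / (z\<^sub>2 - z\<^sub>1) - (f z\<^sub>1 - f z\<^sub>0) / (z\<^sub>1 - z\<^sub>0)) \<le> - 1 / t"
proof -
  define D where "D = (f z\<^sub>2 - f z\<^sub>1) / (z\<^sub>2 - z\<^sub>1) - (f z\<^sub>1 - f z\<^sub>0) / (z\<^sub>1 - z\<^sub>0)"
  have "crossing f t z\<^sub>1 z\<^sub>2 - crossing f t z\<^sub>0 z\<^sub>1 = (z\<^sub>2 - z\<^sub>0) / 2 + t * D"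
    unfolding crossing_def D_def by (simp add: right_diff_distrib add_divide_distrib diff_divide_distrib)
  moreover have "(z\<^sub>2 - z\<^sub>0) / 2 + t * D \<le> 0 \<longleftrightarrow> 2 / (z\<^sub>2 - z\<^sub>0) * D \<le> - 1 / t"
    using assms by (simp add: field_simps)
  ultimately show ?thesis
    unfolding D_def by linarith
qed

lemma Delta_eq_divided_difference:
  fixes k :: int and n :: nat and y :: real
  assumes "0 < r"
  defines "z\<^sub>0 \<equiv> of_int k / real r ^ n" and "z\<^sub>1 \<equiv> (of_int k + y) / real r ^ n"
    and "z\<^sub>2 \<equiv> (of_int k + 1) / real r ^ n"
  shows "Delta r f n k y
    = 2 / (z\<^sub>2 - z\<^sub>0) * ((f z\<^sub>2 - f z\<^sub>1) / (z\<^sub>2 - z\<^sub>1) - (f z\<^sub>1 - f z\<^sub>0) / (z\<^sub>1 - z\<^sub>0))"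
proof -
  have "z\<^sub>2 - z\<^sub>0 = 1 / real r ^ n" "z\<^sub>2 - z\<^sub>1 = (1 - y) / real r ^ n" "z\<^sub>1 - z\<^sub>0 = y / real r ^ n"
    unfolding z\<^sub>0_def z\<^sub>1_def z\<^sub>2_def by (simp_all add: diff_divide_distrib [symmetric])
  then show ?thesis
    unfolding Delta_def delta_plus_def delta_minus_def z\<^sub>0_def [symmetric] z\<^sub>1_def [symmetric]
      z\<^sub>2_def [symmetric]
    using assms(1) by simp
qed

theorem proposition2p2:
  fixes r n :: nat and k :: int and f :: "real \<Rightarrow> real" and y t :: real
  assumes "r \<ge> 2" and "f \<in> Cp" and "0 \<le> k" and "k \<le> int (r ^ n) - 1"
    and "0 < y" and "y < 1" and "0 < t"
  shows "(\<forall>x::real. q f t x ((of_int k + y) / real r ^ n)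
            \<ge> min (q f t x (of_int k / real r ^ n)) (q f t x ((of_int k + 1) / real r ^ n)))
         \<longleftrightarrow> Delta r f n k y \<le> - 1 / t"
proof -
  define z\<^sub>0 where "z\<^sub>0 = of_int k / real r ^ n"
  define z\<^sub>1 where "z\<^sub>1 = (of_int k + y) / real r ^ n"
  define z\<^sub>2 where "z\<^sub>2 = (of_int k + 1) / real r ^ n"
  have "0 < real r ^ n"
    using assms(1) by simp
  then have "z\<^sub>0 < z\<^sub>1" "z\<^sub>1 < z\<^sub>2"
    unfolding z\<^sub>0_def z\<^sub>1_def z\<^sub>2_def using assms(5,6) by (simp_all add: divide_strict_right_mono)
  moreover have "0 < r"
    using assms(1) by simp
  ultimately show ?thesis
    unfolding z\<^sub>0_def [symmetric] z\<^sub>1_def [symmetric] z\<^sub>2_def [symmetric]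
      Delta_eq_divided_difference [OF \<open>0 < r\<close>]
    by (simp add: q_ge_min_iff_crossing_le crossing_le_iff_divided_difference assms(7))
qed

end
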